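(* (1) For all integers $q \geq s \geq 2$, $R(s,q) \leq 2^{q-1}$, and for $s=2$ equality holds, i.e. $R(2,q)=2^{q-1}$ for all $q \ge 2$. (2) For every fixed integer $s \ge 2$, $R(s,q) \geq (2-o(1))^q$, where the $o(1)$-term tends to $0$ as $q \to \infty$; that is, for every $s\ge 2$ and $\delta>0$ there exists $q_0$ such that $R(s,q) \ge (2-\delta)^q$ for all $q \ge q_0$.
   Context: Let $Z_s$ be the ring of integers modulo $s$. For $A \subseteq Z_s$, a vector $v=(v_1,\dots,v_q)\in Z_s^q$ is $A$-covering if for every $a \in A$ there is $1 \le i \le q$ with $v_i = a$. A family $\mathcal{F} \subseteq Z_s^q$ is $A$-covering if for every ordered pair of distinct vectors $u,v \in \mathcal{F}$ the difference $u-v$ is $A$-covering; it is covering if it is $Z_s$-covering. $R(s,q)$ denotes the maximum possible cardinality of a covering family in $Z_s^q$. *)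

theory Defs
  imports Complex_Main
begin

text \<open>Vectors of Z_s^q are represented as functions v :: nat => nat with
  v i < s for i < q (entries as residues 0..s-1) and v i = 0 for i >= q.\<close>
definition vecs :: "nat \<Rightarrow> nat \<Rightarrow> (nat \<Rightarrow> nat) set" where
  "vecs s q = {v. (\<forall>i<q. v i < s) \<and> (\<forall>i\<ge>q. v i = 0)}"

definition vdiff :: "nat \<Rightarrow> (nat \<Rightarrow> nat) \<Rightarrow> (nat \<Rightarrow> nat) \<Rightarrow> nat \<Rightarrow> nat" where
  "vdiff s u v = (\<lambda>i. nat ((int (u i) - int (v i)) mod int s))"

definition A_covering :: "nat set \<Rightarrow> nat \<Rightarrow> (nat \<Rightarrow> nat) \<Rightarrow> bool" where
  "A_covering A q w = (\<forall>a\<in>A. \<exists>i<q. w i = a)"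

definition covering_family :: "nat \<Rightarrow> nat \<Rightarrow> (nat \<Rightarrow> nat) set \<Rightarrow> bool" where
  "covering_family s q F = (F \<subseteq> vecs s q \<and>
     (\<forall>u\<in>F. \<forall>v\<in>F. u \<noteq> v \<longrightarrow> A_covering {0..<s} q (vdiff s u v)))"

definition R :: "nat \<Rightarrow> nat \<Rightarrow> nat" where
  "R s q = Max (card ` {F. covering_family s q F})"

end

theory Submission
  imports Defs "HOL-Library.Function_Algebras" "HOL-Probability.Product_PMF"
begin

(* Upper bound (polynomial method).  Let w be a primitive s-th root of unity.  For a covering
   family F and an integer r, consider the functions
     f_u(v) = sum_{a<s} w^(a r) * prod_{i<q} (1 - w^(u_i - v_i - a)),   u in F.
   If v ~= u lies in F, some coordinate of u - v equals a for every a, so every product vanishes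
   and f_u(v) = 0; the diagonal value f_u(u) does not depend on u and, by Fourier inversion in r,
   is nonzero for some r.  Hence the f_u are linearly independent.  Expanding the products and
   summing over a shows that each f_u is a combination of the characters
   v |-> w^(- sum_{i in S} v_i) with |S| = r (mod s), and there are at most 2^(q-1) such S.  For
   s = 2 the vectors in {0,1}^q with first coordinate 0 attain the bound.

   Lower bound.  Fix d >= s - 2 and N.  A set x of pairs (b, p) with b < M and p in [1,N]^d yields
   an integer vector with one constant coordinate and, for every block b < M and w in [0,N]^d,
   the coordinate sum_{k<=d} (k+1) [(b, w + e_k) in x], where e_0 = 0 and e_(i+1) is the i-th
   unit vector.  For each k <= d, order [1,N]^d by a radix code and read every block of x as a
   binary number in that order.  By pigeonhole, a (M 2^((N+2)^d))^(d+1)-th part of the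
   2^(M N^d) sets x has the same sum of block numbers for every k.  For two such sets x, x' and a
   given k, some block of x is at least the block of x'; at the top point j where these blocks
   differ, j lies in x only, and for w = j - e_k all other points w + e_k' are higher in the order,
   so the two vectors differ by exactly k + 1 at (b, w).  Thus
     R(s, M (N+1)^d + 1) >= 2^(M N^d) / (M 2^((N+2)^d))^(d+1),
   and letting M grow, with N chosen so that (N+1)^d / N^d is close to 1, gives (2 - o(1))^q. *)

lemma vecs_eq_PiE_dflt: "vecs s q = PiE_dflt {..<q} 0 (\<lambda>_. {..<s})"
  by (simp add: vecs_def PiE_dflt_def all_conj_distrib not_less)

lemma finite_vecs: "finite (vecs s q)"
  by (simp add: vecs_eq_PiE_dflt finite_PiE_dflt)

lemma finite_covering_families: "finite {F. covering_family s q F}"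
  by (rule finite_subset[of _ "Pow (vecs s q)"]) (auto simp: covering_family_def finite_vecs)

lemma card_le_R: "covering_family s q F \<Longrightarrow> card F \<le> R s q"
  unfolding R_def using finite_covering_families by (intro Max_ge) auto

lemma R_attained: "\<exists>F. covering_family s q F \<and> card F = R s q"
proof -
  have "covering_family s q {}"
    by (simp add: covering_family_def)
  then have "R s q \<in> card ` {F. covering_family s q F}"
    unfolding R_def using finite_covering_families by (intro Max_in) auto
  then show ?thesis
    by auto
qed

lemma R_ge_1: "0 < s \<Longrightarrow> 1 \<le> R s q"
  using card_le_R[of s q "{\<lambda>_. 0}"] by (simp add: covering_family_def vecs_def)

lemma card_le_R_of_int_vectors:
  fixes U :: "'x \<Rightarrow> 'c \<Rightarrow> int"
  assumes s: "2 \<le> s" and C: "finite C" "card C \<le> q"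
    and covers: "\<And>x x' a. x \<in> X \<Longrightarrow> x' \<in> X \<Longrightarrow> x \<noteq> x' \<Longrightarrow> a < s \<Longrightarrow>
                   \<exists>c\<in>C. (U x c - U x' c) mod int s = int a"
  shows "card X \<le> R s q"
proof -
  obtain e where e: "bij_betw e {..<card C} C"
    using ex_bij_betw_nat_finite[OF C(1)] atLeast0LessThan by auto
  define vec where "vec x = (\<lambda>i. if i < card C then nat (U x (e i) mod int s) else 0)" for x
  have vec_diff: "vdiff s (vec x) (vec x') i = nat ((U x (e i) - U x' (e i)) mod int s)"
    if "i < card C" for x x' i
    using that s by (simp add: vdiff_def vec_def mod_diff_eq)
  have vec_covers: "A_covering {0..<s} q (vdiff s (vec x) (vec x'))"
    if xx': "x \<in> X" "x' \<in> X" "x \<noteq> x'" for x x'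
    unfolding A_covering_def
  proof
    fix a assume "a \<in> {0..<s}"
    then obtain c where c: "c \<in> C" "(U x c - U x' c) mod int s = int a"
      using covers[OF xx'] by auto
    then obtain i where "i < card C" "e i = c"
      using e unfolding bij_betw_def by (metis imageE lessThan_iff)
    then show "\<exists>i<q. vdiff s (vec x) (vec x') i = a"
      using C(2) c vec_diff by (intro exI[of _ i]) auto
  qed
  have "inj_on vec X"
  proof
    fix x x' assume x: "x \<in> X" "x' \<in> X" and eq: "vec x = vec x'"
    show "x = x'"
    proof (rule ccontr)
      assume "x \<noteq> x'"
      then obtain i where "vdiff s (vec x) (vec x') i = 1"
        using vec_covers[OF x] s unfolding A_covering_def by fastforce
      with eq show False
        by (simp add: vdiff_def)
    qed
  qed
  moreover have "covering_family s q (vec ` X)"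
  proof -
    have "nat (U x (e i) mod int s) < s" for x i
      using s by (simp add: nat_less_iff)
    then have "vec ` X \<subseteq> vecs s q"
      using C(2) s by (auto simp: vecs_def vec_def)
    then show ?thesis
      unfolding covering_family_def using vec_covers by blast
  qed
  ultimately show ?thesis
    using card_le_R[of s q "vec ` X"] card_image[of vec X] by simp
qed

section \<open>Upper bound by the polynomial method\<close>

definition unity_root :: "nat \<Rightarrow> int \<Rightarrow> complex" where
  "unity_root s k = cis (2 * pi * of_int k / of_nat s)"

lemma unity_root_add: "unity_root s (a + b) = unity_root s a * unity_root s b"
  by (simp add: unity_root_def cis_mult add_divide_distrib distrib_left)

lemma unity_root_0 [simp]: "unity_root s 0 = 1"
  by (simp add: unity_root_def)

lemma unity_root_sum: "unity_root s (\<Sum>i\<in>S. f i) = (\<Prod>i\<in>S. unity_root s (f i))"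
  by (induction S rule: infinite_finite_induct) (auto simp: unity_root_add)

lemma unity_root_mult_of_nat: "unity_root s (int a * k) = unity_root s k ^ a"
  by (induction a) (auto simp: unity_root_add distrib_right)

lemma unity_root_eq_1_iff:
  assumes "0 < s"
  shows "unity_root s k = 1 \<longleftrightarrow> int s dvd k"
proof
  assume "unity_root s k = 1"
  then have "cos (2 * pi * of_int k / of_nat s) = 1"
    unfolding unity_root_def by (metis cis.sel(1) one_complex.sel(1))
  then obtain n :: int where "2 * pi * of_int k / of_nat s = of_int n * 2 * pi"
    using cos_one_2pi_int by blast
  then have "real_of_int k = of_int (n * int s)"
    using assms by (simp add: field_simps)
  then show "int s dvd k"
    by (metis dvd_triv_right of_int_eq_iff)
next
  assume "int s dvd k"
  then obtain t where "k = int s * t"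
    by (auto elim: dvdE)
  then have "2 * pi * of_int k / of_nat s = 2 * pi * of_int t"
    using assms by (simp add: field_simps)
  then show "unity_root s k = 1"
    by (simp add: unity_root_def)
qed

lemma sum_unity_root:
  assumes "0 < s"
  shows "(\<Sum>a<s. unity_root s (int a * k)) = (if int s dvd k then of_nat s else 0)"
proof (cases "int s dvd k")
  case True
  then have "unity_root s k = 1"
    using assms by (simp add: unity_root_eq_1_iff)
  then show ?thesis
    using True by (simp add: unity_root_mult_of_nat)
next
  case False
  have "unity_root s k ^ s = 1"
    using assms unity_root_mult_of_nat[of s s k] unity_root_eq_1_iff[of s "int s * k"] by simp
  moreover have "unity_root s k \<noteq> 1"
    using False assms by (simp add: unity_root_eq_1_iff)
  ultimately show ?thesis
    using False by (simp add: unity_root_mult_of_nat sum_gp_strict)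
qed

lemma inj_on_diagonal:
  assumes "\<And>u v. u \<in> F \<Longrightarrow> v \<in> F \<Longrightarrow> u \<noteq> v \<Longrightarrow> g u v = 0"
    and "\<And>u. u \<in> F \<Longrightarrow> g u u \<noteq> 0"
  shows "inj_on g F"
  by (metis assms inj_onI)

interpretation fun_space: vector_space "\<lambda>c (f :: 'a \<Rightarrow> 'b::field) v. c * f v"
  by unfold_locales (auto simp: fun_eq_iff algebra_simps)

lemma sum_fun_apply: "(\<Sum>x\<in>S. h x) v = (\<Sum>x\<in>S. h x v)"
  by (induction S rule: infinite_finite_induct) auto

lemma independent_of_diagonal:
  fixes g :: "'a \<Rightarrow> 'a \<Rightarrow> 'b::field"
  assumes F: "finite F"
    and off_diag: "\<And>u v. u \<in> F \<Longrightarrow> v \<in> F \<Longrightarrow> u \<noteq> v \<Longrightarrow> g u v = 0"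
    and diag: "\<And>u. u \<in> F \<Longrightarrow> g u u \<noteq> 0"
  shows "fun_space.independent (g ` F)"
proof (rule fun_space.independent_if_scalars_zero)
  show "finite (g ` F)"
    using F by simp
  have inj: "inj_on g F"
    using off_diag diag by (rule inj_on_diagonal)
  fix c f assume comb: "(\<Sum>h\<in>g ` F. (\<lambda>v. c h * h v)) = 0" and "f \<in> g ` F"
  then obtain u where u: "u \<in> F" "f = g u"
    by blast
  have "0 = (\<Sum>h\<in>g ` F. (\<lambda>v. c h * h v)) u"
    using comb by simp
  also have "\<dots> = (\<Sum>h\<in>g ` F. c h * h u)"
    by (rule sum_fun_apply)
  also have "\<dots> = (\<Sum>u'\<in>F. c (g u') * g u' u)"
    using inj by (simp add: sum.reindex)
  also have "\<dots> = c (g u) * g u u + (\<Sum>u'\<in>F - {u}. c (g u') * g u' u)"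
    using F u(1) by (rule sum.remove)
  also have "(\<Sum>u'\<in>F - {u}. c (g u') * g u' u) = 0"
    using u(1) off_diag by (intro sum.neutral) auto
  finally show "c f = 0"
    using diag u by simp
qed

lemma card_le_of_diagonal_in_span:
  fixes g :: "'a \<Rightarrow> 'a \<Rightarrow> 'b::field" and b :: "'i \<Rightarrow> 'a \<Rightarrow> 'b"
  assumes I: "finite I"
    and span: "\<And>u. u \<in> F \<Longrightarrow> \<exists>c. \<forall>v. g u v = (\<Sum>i\<in>I. c i * b i v)"
    and off_diag: "\<And>u v. u \<in> F \<Longrightarrow> v \<in> F \<Longrightarrow> u \<noteq> v \<Longrightarrow> g u v = 0"
    and diag: "\<And>u. u \<in> F \<Longrightarrow> g u u \<noteq> 0"
  shows "card F \<le> card I"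
proof (cases "finite F")
  case True
  have "g ` F \<subseteq> fun_space.span (b ` I)"
  proof
    fix f assume "f \<in> g ` F"
    then obtain c where "\<forall>v. f v = (\<Sum>i\<in>I. c i * b i v)"
      using span by blast
    then have "f = (\<Sum>i\<in>I. (\<lambda>v. c i * b i v))"
      by (simp add: fun_eq_iff sum_fun_apply)
    then show "f \<in> fun_space.span (b ` I)"
      by (auto intro: fun_space.span_sum fun_space.span_scale fun_space.span_base)
  qed
  moreover have "fun_space.independent (g ` F)"
    using True off_diag diag by (rule independent_of_diagonal)
  ultimately have "card (g ` F) \<le> card (b ` I)"
    using fun_space.independent_span_bound I by blast
  moreover have "inj_on g F"
    using off_diag diag by (rule inj_on_diagonal)
  ultimately show ?thesis
    using card_image card_image_le[OF I, of b] by (metis le_trans)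
qed simp

definition cover_poly :: "nat \<Rightarrow> nat \<Rightarrow> int \<Rightarrow> (nat \<Rightarrow> nat) \<Rightarrow> (nat \<Rightarrow> nat) \<Rightarrow> complex" where
  "cover_poly s q r u v =
     (\<Sum>a<s. unity_root s (int a * r) * (\<Prod>i<q. 1 - unity_root s (int (u i) - int (v i) - int a)))"

definition cover_poly_diag :: "nat \<Rightarrow> nat \<Rightarrow> int \<Rightarrow> complex" where
  "cover_poly_diag s q r = (\<Sum>a<s. unity_root s (int a * r) * (1 - unity_root s (- int a)) ^ q)"

lemma cover_poly_same: "cover_poly s q r u u = cover_poly_diag s q r"
  by (simp add: cover_poly_def cover_poly_diag_def)

lemma cover_poly_eq_0:
  assumes s: "0 < s" and cov: "A_covering {0..<s} q (vdiff s u v)"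
  shows "cover_poly s q r u v = 0"
  unfolding cover_poly_def
proof (intro sum.neutral ballI)
  fix a assume "a \<in> {..<s}"
  then obtain i where i: "i < q" "nat ((int (u i) - int (v i)) mod int s) = a"
    using cov unfolding A_covering_def vdiff_def by (metis atLeast0LessThan)
  then have "(int (u i) - int (v i)) mod int s = int a"
    using s by (simp add: nat_eq_iff)
  then have "int s dvd int (u i) - int (v i) - int a"
    by (metis mod_eq_dvd_iff mod_mod_trivial)
  then have "(\<Prod>i<q. 1 - unity_root s (int (u i) - int (v i) - int a)) = 0"
    using s i(1) by (intro prod_zero) (auto simp: unity_root_eq_1_iff)
  then show "unity_root s (int a * r) *
      (\<Prod>i<q. 1 - unity_root s (int (u i) - int (v i) - int a)) = 0"
    by simp
qed

lemma sum_cover_poly_diag: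
  assumes s: "1 < s"
  shows "(\<Sum>r<s. unity_root s (- int r) * cover_poly_diag s q (int r)) =
           of_nat s * (1 - unity_root s (- 1)) ^ q"
proof -
  have root_mult: "unity_root s (- int r) * unity_root s (int a * int r) =
                   unity_root s (int r * (int a - 1))" for a r
    by (simp add: unity_root_add[symmetric] algebra_simps)
  have dvd_iff: "int s dvd int a - 1 \<longleftrightarrow> a = 1" if "a < s" for a
  proof
    assume dvd: "int s dvd int a - 1"
    show "a = 1"
    proof (rule ccontr)
      assume "a \<noteq> 1"
      then have "\<bar>int s\<bar> \<le> \<bar>int a - 1\<bar>"
        using dvd by (intro dvd_imp_le_int) auto
      then show False
        using that s by linarith
    qed
  qed simp
  have "(\<Sum>r<s. unity_root s (- int r) * cover_poly_diag s q (int r)) =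
        (\<Sum>a<s. (1 - unity_root s (- int a)) ^ q * (\<Sum>r<s. unity_root s (int r * (int a - 1))))"
    unfolding cover_poly_diag_def sum_distrib_left
    by (subst sum.swap) (simp add: root_mult[symmetric] mult_ac)
  also have "\<dots> = (\<Sum>a<s. if a = 1 then of_nat s * (1 - unity_root s (- 1)) ^ q else 0)"
    using s by (intro sum.cong) (auto simp: sum_unity_root dvd_iff)
  also have "\<dots> = of_nat s * (1 - unity_root s (- 1)) ^ q"
    using s by simp
  finally show ?thesis .
qed

lemma cover_poly_diag_nonzero:
  assumes s: "2 \<le> s"
  shows "\<exists>r. cover_poly_diag s q r \<noteq> 0"
proof -
  have "unity_root s (- 1) \<noteq> 1"
    using s by (simp add: unity_root_eq_1_iff)
  then have "(\<Sum>r<s. unity_root s (- int r) * cover_poly_diag s q (int r)) \<noteq> 0"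
    using s by (simp add: sum_cover_poly_diag)
  then obtain r where "unity_root s (- int r) * cover_poly_diag s q (int r) \<noteq> 0"
    by (meson sum.neutral)
  then show ?thesis
    by auto
qed

definition subsets_card_cong :: "nat \<Rightarrow> nat \<Rightarrow> int \<Rightarrow> nat set set" where
  "subsets_card_cong s q r = {S. S \<subseteq> {..<q} \<and> int s dvd r - int (card S)}"

lemma card_subsets_card_cong_le:
  assumes s: "2 \<le> s"
  shows "card (subsets_card_cong s q r) \<le> 2 ^ (q - 1)"
proof -
  have inj: "inj_on (\<lambda>S. S - {q - 1}) (subsets_card_cong s q r)"
  proof
    fix S S' assume S: "S \<in> subsets_card_cong s q r" and S': "S' \<in> subsets_card_cong s q r"
      and eq: "S - {q - 1} = S' - {q - 1}"
    show "S = S'"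
    proof (rule ccontr)
      assume "S \<noteq> S'"
      have fin: "finite S" "finite S'"
        using S S' by (auto simp: subsets_card_cong_def intro: finite_subset)
      have "q - 1 \<in> S \<and> S' = S - {q - 1} \<or> q - 1 \<in> S' \<and> S = S' - {q - 1}"
        using eq \<open>S \<noteq> S'\<close> by blast
      then have "card S = Suc (card S') \<or> card S' = Suc (card S)"
        using fin by (metis card_Suc_Diff1)
      moreover have "int s dvd int (card S) - int (card S')"
        using S S' dvd_diff[of "int s" "r - int (card S')" "r - int (card S)"]
        by (simp add: subsets_card_cong_def)
      ultimately have "int s dvd 1"
        by (elim disjE) simp_all
      then show False
        using s by simp
    qed
  qed
  have sub: "(\<lambda>S. S - {q - 1}) ` subsets_card_cong s q r \<subseteq> Pow {..<q - 1}"
    by (auto simp: subsets_card_cong_def)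
  have "card (subsets_card_cong s q r) = card ((\<lambda>S. S - {q - 1}) ` subsets_card_cong s q r)"
    using inj by (rule card_image[symmetric])
  also have "\<dots> \<le> card (Pow {..<q - 1})"
    using sub by (intro card_mono) simp_all
  finally show ?thesis
    by (simp add: card_Pow)
qed

lemma prod_one_minus_unity_root:
  fixes e :: "nat \<Rightarrow> int"
  shows "(\<Prod>i<q. 1 - unity_root s (e i - a)) =
     (\<Sum>S\<in>Pow {..<q}. (-1) ^ card S * unity_root s (\<Sum>i\<in>S. e i) * unity_root s (a * - int (card S)))"
proof -
  have "(\<Prod>i<q. 1 - unity_root s (e i - a)) = (\<Sum>S\<in>Pow {..<q}. (\<Prod>i\<in>S. - unity_root s (e i - a)))"
    using prod_add[of "{..<q}" "\<lambda>i. - unity_root s (e i - a)" "\<lambda>_. 1"] by simp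
  also have "\<dots> = (\<Sum>S\<in>Pow {..<q}.
      (-1) ^ card S * unity_root s (\<Sum>i\<in>S. e i) * unity_root s (a * - int (card S)))"
  proof (intro sum.cong refl)
    fix S :: "nat set"
    have "(\<Prod>i\<in>S. - unity_root s (e i - a)) = (\<Prod>i\<in>S. (-1) * unity_root s (e i - a))"
      by simp
    also have "\<dots> = (-1) ^ card S * unity_root s (\<Sum>i\<in>S. e i - a)"
      by (simp only: prod.distrib prod_constant unity_root_sum)
    also have "(\<Sum>i\<in>S. e i - a) = (\<Sum>i\<in>S. e i) + a * - int (card S)"
      by (simp add: sum_subtractf)
    finally show "(\<Prod>i\<in>S. - unity_root s (e i - a)) =
        (-1) ^ card S * unity_root s (\<Sum>i\<in>S. e i) * unity_root s (a * - int (card S))"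
      by (simp add: mult.assoc flip: unity_root_add)
  qed
  finally show ?thesis .
qed

lemma cover_poly_expand:
  assumes s: "0 < s"
  shows "cover_poly s q r u v =
           (\<Sum>S\<in>subsets_card_cong s q r. of_nat s * (-1) ^ card S *
              unity_root s (\<Sum>i\<in>S. int (u i)) * unity_root s (- (\<Sum>i\<in>S. int (v i))))"
proof -
  define e where "e i = int (u i) - int (v i)" for i
  have e_split: "unity_root s (\<Sum>i\<in>S. e i) =
                 unity_root s (\<Sum>i\<in>S. int (u i)) * unity_root s (- (\<Sum>i\<in>S. int (v i)))" for S
    by (simp add: e_def sum_subtractf flip: unity_root_add)
  have subsets_card_cong_eq:
    "subsets_card_cong s q r = {S \<in> Pow {..<q}. int s dvd r - int (card S)}"
    by (auto simp: subsets_card_cong_def)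
  have root_mult: "unity_root s (int a * r) * unity_root s (int a * - int (card S)) =
                   unity_root s (int a * (r - int (card S)))" for a and S :: "nat set"
    by (simp add: algebra_simps flip: unity_root_add)
  have "cover_poly s q r u v =
        (\<Sum>a<s. \<Sum>S\<in>Pow {..<q}. (-1) ^ card S * unity_root s (\<Sum>i\<in>S. e i) *
           unity_root s (int a * (r - int (card S))))"
    unfolding cover_poly_def e_def[symmetric] prod_one_minus_unity_root sum_distrib_left
    by (simp only: root_mult[symmetric] mult_ac)
  also have "\<dots> = (\<Sum>S\<in>Pow {..<q}. (-1) ^ card S * unity_root s (\<Sum>i\<in>S. e i) *
           (\<Sum>a<s. unity_root s (int a * (r - int (card S)))))"
    by (subst sum.swap) (simp only: sum_distrib_left)
  also have "\<dots> = (\<Sum>S\<in>Pow {..<q}. if int s dvd r - int (card S)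
                     then of_nat s * (-1) ^ card S * unity_root s (\<Sum>i\<in>S. e i) else 0)"
    by (intro sum.cong refl) (simp add: sum_unity_root[OF s])
  also have "\<dots> = (\<Sum>S\<in>subsets_card_cong s q r. of_nat s * (-1) ^ card S * unity_root s (\<Sum>i\<in>S. e i))"
    unfolding subsets_card_cong_eq by (rule sum.inter_filter[symmetric]) simp
  finally show ?thesis
    by (simp add: e_split mult.assoc)
qed

lemma covering_family_card_le:
  assumes s: "2 \<le> s" and F: "covering_family s q F"
  shows "card F \<le> 2 ^ (q - 1)"
proof -
  obtain r where r: "cover_poly_diag s q r \<noteq> 0"
    using cover_poly_diag_nonzero[OF s] by blast
  have "card F \<le> card (subsets_card_cong s q r)"
  proof (rule card_le_of_diagonal_in_span[where g = "cover_poly s q r"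
        and b = "\<lambda>S v. unity_root s (- (\<Sum>i\<in>S. int (v i)))"])
    show "finite (subsets_card_cong s q r)"
      by (rule finite_subset[of _ "Pow {..<q}"]) (auto simp: subsets_card_cong_def)
    show "\<exists>c. \<forall>v. cover_poly s q r u v =
            (\<Sum>S\<in>subsets_card_cong s q r. c S * unity_root s (- (\<Sum>i\<in>S. int (v i))))" for u
      using s by (intro exI[of _ "\<lambda>S. of_nat s * (-1) ^ card S * unity_root s (\<Sum>i\<in>S. int (u i))"])
        (simp add: cover_poly_expand)
    show "cover_poly s q r u v = 0" if "u \<in> F" "v \<in> F" "u \<noteq> v" for u v
      using s F that by (intro cover_poly_eq_0) (auto simp: covering_family_def)
    show "cover_poly s q r u u \<noteq> 0" for u
      using r by (simp add: cover_poly_same)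
  qed
  also have "\<dots> \<le> 2 ^ (q - 1)"
    using s by (rule card_subsets_card_cong_le)
  finally show ?thesis .
qed

lemma R_le: "2 \<le> s \<Longrightarrow> R s q \<le> 2 ^ (q - 1)"
  using R_attained covering_family_card_le by metis

lemma R_2_ge:
  assumes "1 \<le> q"
  shows "2 ^ (q - 1) \<le> R 2 q"
proof -
  define F where "F = PiE_dflt {1..<q} 0 (\<lambda>_. {..<2::nat})"
  have bits: "v 0 = 0" "v i < 2" "q \<le> i \<Longrightarrow> v i = 0" if "v \<in> F" for v i
  proof -
    have v: "(i \<in> {1..<q} \<longrightarrow> v i < 2) \<and> (i \<notin> {1..<q} \<longrightarrow> v i = 0)" for i
      using that by (simp add: F_def PiE_dflt_def)
    show "v 0 = 0"
      using v[of 0] by simp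
    show "v i < 2"
      using v[of i] by (cases "i \<in> {1..<q}") simp_all
    show "q \<le> i \<Longrightarrow> v i = 0"
      using v[of i] by simp
  qed
  have "A_covering {0..<2} q (vdiff 2 u v)" if uv: "u \<in> F" "v \<in> F" "u \<noteq> v" for u v
    unfolding A_covering_def
  proof (intro ballI)
    fix a :: nat assume "a \<in> {0..<2}"
    then consider "a = 0" | "a = 1"
      by fastforce
    then show "\<exists>i<q. vdiff 2 u v i = a"
    proof cases
      case 1
      then show ?thesis
        using assms bits[OF uv(1)] bits[OF uv(2)] by (intro exI[of _ 0]) (simp add: vdiff_def)
    next
      case 2
      obtain i where i: "u i \<noteq> v i"
        using uv(3) by blast
      have "i < q"
        using i bits(3)[OF uv(1)] bits(3)[OF uv(2)] by (metis not_le)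
      moreover have "u i = 0 \<and> v i = 1 \<or> u i = 1 \<and> v i = 0"
        using i bits(2)[OF uv(1), of i] bits(2)[OF uv(2), of i] by linarith
      ultimately show ?thesis
        using 2 by (intro exI[of _ i]) (auto simp: vdiff_def)
    qed
  qed
  moreover have "F \<subseteq> vecs 2 q"
    using bits by (auto simp: vecs_def)
  ultimately have "covering_family 2 q F"
    unfolding covering_family_def by blast
  moreover have "card F = 2 ^ (q - 1)"
    by (simp add: F_def card_PiE_dflt)
  ultimately show ?thesis
    using card_le_R[of 2 q F] by simp
qed

section \<open>A covering family built from bit arrays\<close>

definition cube :: "nat \<Rightarrow> nat \<Rightarrow> nat \<Rightarrow> (nat \<Rightarrow> nat) set" where
  "cube d a b = PiE_dflt {..<d} 0 (\<lambda>_. {a..b})"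

lemma mem_cube: "p \<in> cube d a b \<longleftrightarrow> (\<forall>i<d. a \<le> p i \<and> p i \<le> b) \<and> (\<forall>i\<ge>d. p i = 0)"
  by (simp add: cube_def PiE_dflt_def all_conj_distrib not_less)

lemma cube_le: "p \<in> cube d a b \<Longrightarrow> i < d \<Longrightarrow> a \<le> p i \<and> p i \<le> b"
  by (simp add: mem_cube)

lemma cube_zero: "p \<in> cube d a b \<Longrightarrow> d \<le> i \<Longrightarrow> p i = 0"
  by (simp add: mem_cube)

lemma finite_cube: "finite (cube d a b)"
  by (simp add: cube_def finite_PiE_dflt)

lemma card_cube: "card (cube d a b) = (b + 1 - a) ^ d"
  by (simp add: cube_def card_PiE_dflt)

definition radix :: "nat \<Rightarrow> nat \<Rightarrow> (nat \<Rightarrow> nat) \<Rightarrow> nat" where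
  "radix B d p = (\<Sum>i<d. p i * B ^ i)"

lemma radix_Suc: "radix B (Suc d) p = radix B d p + p d * B ^ d"
  by (simp add: radix_def)

lemma radix_lt: "(\<And>i. i < d \<Longrightarrow> p i < B) \<Longrightarrow> radix B d p < B ^ d"
proof (induction d)
  case 0
  then show ?case
    by (simp add: radix_def)
next
  case (Suc d)
  have "radix B (Suc d) p < B ^ d + p d * B ^ d"
    using Suc by (simp add: radix_Suc)
  also have "\<dots> = Suc (p d) * B ^ d"
    by simp
  also have "\<dots> \<le> B * B ^ d"
    using Suc.prems[of d] by (intro mult_right_mono) auto
  finally show ?case
    by simp
qed

lemma radix_eq_imp_eq:
  assumes "\<And>i. i < d \<Longrightarrow> p i < B" "\<And>i. i < d \<Longrightarrow> p' i < B" "radix B d p = radix B d p'" "i < d"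
  shows "p i = p' i"
  using assms
proof (induction d)
  case 0
  then show ?case
    by simp
next
  case (Suc d)
  have lt: "radix B d p < B ^ d" "radix B d p' < B ^ d"
    using Suc.prems(1,2) by (auto intro: radix_lt)
  have "0 < B"
    using Suc.prems(1)[of 0] by simp
  then have "(radix B d f + f d * B ^ d) div B ^ d = f d" if "radix B d f < B ^ d" for f
    using that by simp
  then have top: "p d = p' d"
    using Suc.prems(3) lt by (metis radix_Suc)
  then have "radix B d p = radix B d p'"
    using Suc.prems(3) by (simp add: radix_Suc)
  then show ?case
    using Suc top by (cases "i = d") auto
qed

lemma radix_less_radix:
  assumes "0 < B" "\<And>i. i < d \<Longrightarrow> p i \<le> p' i" "i < d" "p i < p' i"
  shows "radix B d p < radix B d p'"
  unfolding radix_def using assms by (intro sum_strict_mono_ex1) auto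

definition shift :: "(nat \<Rightarrow> nat) \<Rightarrow> nat \<Rightarrow> nat \<Rightarrow> nat" where
  "shift w k = (\<lambda>i. if k = Suc i then Suc (w i) else w i)"

definition unshift :: "(nat \<Rightarrow> nat) \<Rightarrow> nat \<Rightarrow> nat \<Rightarrow> nat" where
  "unshift j k = (\<lambda>i. if k = Suc i then j i - 1 else j i)"

lemma shift_unshift:
  assumes "j \<in> cube d 1 N" "k \<le> d"
  shows "shift (unshift j k) k = j"
proof
  fix i
  have "k = Suc i \<Longrightarrow> 1 \<le> j i"
    using assms by (simp add: mem_cube)
  then show "shift (unshift j k) k i = j i"
    by (auto simp: shift_def unshift_def)
qed

lemma unshift_in_cube: "j \<in> cube d 1 N \<Longrightarrow> unshift j k \<in> cube d 0 N"
  by (auto simp: unshift_def mem_cube)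

(* Reflecting digit k - 1 (for k > 0) makes the code grow both when that digit drops and when
   another digit rises, so for w = j - e_k every point w + e_k' with k' ~= k lies above j. *)
definition twisted_radix :: "nat \<Rightarrow> nat \<Rightarrow> nat \<Rightarrow> (nat \<Rightarrow> nat) \<Rightarrow> nat" where
  "twisted_radix N d k p = radix (N + 2) d (\<lambda>i. if k = Suc i then N + 1 - p i else p i)"

lemma twisted_radix_lt: "p \<in> cube d 1 N \<Longrightarrow> twisted_radix N d k p < (N + 2) ^ d"
  unfolding twisted_radix_def by (rule radix_lt) (auto simp: mem_cube)

lemma inj_on_twisted_radix: "inj_on (twisted_radix N d k) (cube d 1 N)"
proof
  fix p p' assume p: "p \<in> cube d 1 N" and p': "p' \<in> cube d 1 N"
    and eq: "twisted_radix N d k p = twisted_radix N d k p'"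
  define digit where "digit f = (\<lambda>i. if k = Suc i then N + 1 - f i else f i)" for f
  have digit_lt: "digit f i < N + 2" if "f \<in> cube d 1 N" "i < d" for f i
    using cube_le[OF that] by (auto simp: digit_def)
  show "p = p'"
  proof
    fix i
    show "p i = p' i"
    proof (cases "i < d")
      case True
      have "radix (N + 2) d (digit p) = radix (N + 2) d (digit p')"
        using eq by (simp add: twisted_radix_def digit_def)
      then have "digit p i = digit p' i"
        using radix_eq_imp_eq[of d "digit p" "N + 2" "digit p'" i] digit_lt[OF p] digit_lt[OF p']
          True by blast
      then show ?thesis
        using cube_le[OF p True] cube_le[OF p' True] by (simp add: digit_def split: if_splits)
    next
      case False
      then show ?thesis
        using cube_zero[OF p] cube_zero[OF p'] by simp
    qed
  qed
qed

lemma twisted_radix_less_shift_unshift: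
  assumes j: "j \<in> cube d 1 N" and "k \<le> d" "k' \<le> d" "k' \<noteq> k"
  shows "twisted_radix N d k j < twisted_radix N d k (shift (unshift j k) k')"
  unfolding twisted_radix_def
proof (rule radix_less_radix)
  define i where "i = (if k = 0 then k' - 1 else k - 1)"
  show "i < d"
    using assms by (auto simp: i_def)
  show "(if k = Suc i then N + 1 - j i else j i) <
        (if k = Suc i then N + 1 - shift (unshift j k) k' i else shift (unshift j k) k' i)"
    using assms cube_le[OF j \<open>i < d\<close>] by (auto simp: i_def shift_def unshift_def)
  show "(if k = Suc t then N + 1 - j t else j t) \<le>
        (if k = Suc t then N + 1 - shift (unshift j k) k' t else shift (unshift j k) k' t)"
    if "t < d" for t
    using assms cube_le[OF j that] by (auto simp: shift_def unshift_def)
qed simp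

lemma sum_pow2_lt:
  assumes "finite E" "\<And>e. e \<in> E \<Longrightarrow> e < n"
  shows "(\<Sum>e\<in>E. (2::nat) ^ e) < 2 ^ n"
proof -
  have "(\<Sum>e\<in>E. (2::nat) ^ e) \<le> (\<Sum>e=0..<n. 2 ^ e)"
    using assms by (intro sum_mono2) auto
  also have "\<dots> < 2 ^ n"
    by (simp add: sum_power2)
  finally show ?thesis .
qed

lemma max_sym_diff_mem:
  fixes \<rho> :: "'a \<Rightarrow> nat"
  assumes fin: "finite Y" "finite Y'" and inj: "inj_on \<rho> (Y \<union> Y')"
    and le: "(\<Sum>p\<in>Y'. 2 ^ \<rho> p) \<le> (\<Sum>p\<in>Y. (2::nat) ^ \<rho> p)"
    and j: "j \<in> (Y - Y') \<union> (Y' - Y)"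
    and top: "\<And>p. p \<in> (Y - Y') \<union> (Y' - Y) \<Longrightarrow> \<rho> p \<le> \<rho> j"
  shows "j \<in> Y"
proof (rule ccontr)
  assume "j \<notin> Y"
  then have j': "j \<in> Y' - Y"
    using j by blast
  have "inj_on \<rho> (Y - Y')"
    using inj by (rule inj_on_subset) blast
  then have "(\<Sum>p\<in>Y - Y'. 2 ^ \<rho> p) = (\<Sum>e\<in>\<rho> ` (Y - Y'). (2::nat) ^ e)"
    by (simp add: sum.reindex)
  also have "\<dots> < 2 ^ \<rho> j"
  proof (rule sum_pow2_lt)
    show "finite (\<rho> ` (Y - Y'))"
      using fin by simp
    fix e assume "e \<in> \<rho> ` (Y - Y')"
    then obtain p where p: "p \<in> Y - Y'" "e = \<rho> p"
      by blast
    then have "\<rho> p \<noteq> \<rho> j"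
      using inj j' \<open>j \<notin> Y\<close> by (metis DiffD1 UnCI inj_on_contraD)
    then show "e < \<rho> j"
      using top[of p] p by simp
  qed
  also have "\<dots> \<le> (\<Sum>p\<in>Y' - Y. 2 ^ \<rho> p)"
    using fin j' by (intro member_le_sum) auto
  finally have "(\<Sum>p\<in>Y. 2 ^ \<rho> p) < (\<Sum>p\<in>Y'. (2::nat) ^ \<rho> p)"
    using sum.Int_Diff[OF fin(1), where g = "\<lambda>p. (2::nat) ^ \<rho> p" and B = Y']
      sum.Int_Diff[OF fin(2), where g = "\<lambda>p. (2::nat) ^ \<rho> p" and B = Y] by (simp add: Int_commute)
  then show False
    using le by simp
qed

lemma sum_eq_imp_exists_le:
  fixes f g :: "'i \<Rightarrow> 'b::{ordered_cancel_comm_monoid_add, linorder}"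
  assumes "finite I" "(\<Sum>i\<in>I. f i) = (\<Sum>i\<in>I. g i)" "i0 \<in> I" "P i0"
    and "\<And>i. i \<in> I \<Longrightarrow> \<not> P i \<Longrightarrow> f i = g i"
  shows "\<exists>i\<in>I. P i \<and> g i \<le> f i"
proof (rule ccontr)
  assume "\<not> ?thesis"
  then have "f i < g i" if "i \<in> I" "P i" for i
    using that by (simp add: not_le)
  then have "(\<Sum>i\<in>I. f i) < (\<Sum>i\<in>I. g i)"
    using assms by (intro sum_strict_mono_ex1) (auto intro: less_imp_le eq_refl)
  then show False
    using assms(2) by simp
qed

definition block_value :: "nat \<Rightarrow> nat \<Rightarrow> nat \<Rightarrow> (nat \<times> (nat \<Rightarrow> nat)) set \<Rightarrow> nat \<Rightarrow> nat" where
  "block_value N d k x b = (\<Sum>p\<in>x `` {b}. 2 ^ twisted_radix N d k p)"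

lemma block_value_lt:
  assumes "x \<subseteq> {..<M} \<times> cube d 1 N"
  shows "block_value N d k x b < 2 ^ (N + 2) ^ d"
proof -
  have sub: "x `` {b} \<subseteq> cube d 1 N"
    using assms by blast
  then have "block_value N d k x b = (\<Sum>e\<in>twisted_radix N d k ` (x `` {b}). 2 ^ e)"
    unfolding block_value_def using inj_on_subset[OF inj_on_twisted_radix sub]
    by (simp add: sum.reindex)
  also have "\<dots> < 2 ^ (N + 2) ^ d"
    using sub finite_subset[OF sub finite_cube] twisted_radix_lt by (intro sum_pow2_lt) auto
  finally show ?thesis .
qed

definition weight_vec :: "nat \<Rightarrow> (nat \<times> (nat \<Rightarrow> nat)) set \<Rightarrow> (nat \<times> (nat \<Rightarrow> nat)) option \<Rightarrow> int" where
  "weight_vec d x c = (case c of None \<Rightarrow> 0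
     | Some (b, w) \<Rightarrow> (\<Sum>k\<le>d. int (Suc k) * of_bool ((b, shift w k) \<in> x)))"

lemma exists_top_differing_point:
  assumes x: "x \<subseteq> {..<M} \<times> cube d 1 N" and x': "x' \<subseteq> {..<M} \<times> cube d 1 N"
    and "x \<noteq> x'"
    and sums: "(\<Sum>b<M. block_value N d k x b) = (\<Sum>b<M. block_value N d k x' b)"
  obtains b j where "b < M" "j \<in> cube d 1 N" "(b, j) \<in> x" "(b, j) \<notin> x'"
    "\<And>p. ((b, p) \<in> x) \<noteq> ((b, p) \<in> x') \<Longrightarrow> twisted_radix N d k p \<le> twisted_radix N d k j"
proof -
  obtain b0 where b0: "b0 < M" "x `` {b0} \<noteq> x' `` {b0}"
    using \<open>x \<noteq> x'\<close> x x' by blast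
  obtain b where b: "b < M" "x `` {b} \<noteq> x' `` {b}"
    "block_value N d k x' b \<le> block_value N d k x b"
    using sum_eq_imp_exists_le[OF _ sums, of b0 "\<lambda>b. x `` {b} \<noteq> x' `` {b}"] b0
    by (auto simp: block_value_def)
  have sub: "x `` {b} \<subseteq> cube d 1 N" "x' `` {b} \<subseteq> cube d 1 N"
    using x x' by blast+
  define D where "D = (x `` {b} - x' `` {b}) \<union> (x' `` {b} - x `` {b})"
  have D: "D \<subseteq> cube d 1 N" "D \<noteq> {}"
    using sub b(2) by (auto simp: D_def)
  obtain j where j: "j \<in> D"
    and top: "\<And>p. p \<in> D \<Longrightarrow> twisted_radix N d k p \<le> twisted_radix N d k j"
    using ex_has_greatest_nat[of "\<lambda>p. p \<in> D" _ "twisted_radix N d k" "(N + 2) ^ d"]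
      D twisted_radix_lt by blast
  have "j \<in> x `` {b}"
  proof (rule max_sym_diff_mem[where \<rho> = "twisted_radix N d k"])
    show "finite (x `` {b})" "finite (x' `` {b})"
      using sub finite_cube by (auto intro: finite_subset)
    show "inj_on (twisted_radix N d k) (x `` {b} \<union> x' `` {b})"
      using inj_on_twisted_radix by (rule inj_on_subset) (use sub in blast)
    show "(\<Sum>p\<in>x' `` {b}. 2 ^ twisted_radix N d k p) \<le>
          (\<Sum>p\<in>x `` {b}. (2::nat) ^ twisted_radix N d k p)"
      using b(3) by (simp add: block_value_def)
  qed (use j top in \<open>auto simp: D_def\<close>)
  then show ?thesis
    using that[of b j] b(1) j D top by (auto simp: D_def)
qed

lemma weight_vec_diff_eq:
  assumes x: "x \<subseteq> {..<M} \<times> cube d 1 N" and x': "x' \<subseteq> {..<M} \<times> cube d 1 N"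
    and "x \<noteq> x'" and k: "k \<le> d"
    and sums: "(\<Sum>b<M. block_value N d k x b) = (\<Sum>b<M. block_value N d k x' b)"
  shows "\<exists>b<M. \<exists>w\<in>cube d 0 N.
           weight_vec d x (Some (b, w)) - weight_vec d x' (Some (b, w)) = int (Suc k)"
proof -
  obtain b j where b: "b < M" and j: "j \<in> cube d 1 N" "(b, j) \<in> x" "(b, j) \<notin> x'"
    and top: "\<And>p. ((b, p) \<in> x) \<noteq> ((b, p) \<in> x') \<Longrightarrow> twisted_radix N d k p \<le> twisted_radix N d k j"
    using exists_top_differing_point[OF x x' \<open>x \<noteq> x'\<close> sums] by blast
  define w where "w = unshift j k"
  have diff: "of_bool ((b, shift w k') \<in> x) - of_bool ((b, shift w k') \<in> x') =
              (if k' = k then 1 else 0 :: int)" if "k' \<le> d" for k'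
  proof (cases "k' = k")
    case True
    then show ?thesis
      using j shift_unshift[OF j(1) k] by (simp add: w_def)
  next
    case False
    then have "twisted_radix N d k j < twisted_radix N d k (shift w k')"
      unfolding w_def using twisted_radix_less_shift_unshift[OF j(1) k that] by simp
    then have "((b, shift w k') \<in> x) = ((b, shift w k') \<in> x')"
      using top by (meson not_le)
    then show ?thesis
      using False by simp
  qed
  have "weight_vec d x (Some (b, w)) - weight_vec d x' (Some (b, w)) =
        (\<Sum>k'\<le>d. int (Suc k') *
           (of_bool ((b, shift w k') \<in> x) - of_bool ((b, shift w k') \<in> x')))"
    by (simp add: weight_vec_def sum_subtractf right_diff_distrib)
  also have "\<dots> = (\<Sum>k'\<le>d. if k' = k then int (Suc k) else 0)"
    by (intro sum.cong refl) (simp add: diff)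
  also have "\<dots> = int (Suc k)"
    using k by simp
  finally show ?thesis
    using b unshift_in_cube[OF j(1)] by (auto simp: w_def)
qed

lemma weight_vec_covers:
  assumes s: "s \<le> d + 2"
    and x: "x \<subseteq> {..<M} \<times> cube d 1 N" and x': "x' \<subseteq> {..<M} \<times> cube d 1 N" and "x \<noteq> x'"
    and sums: "\<And>k. k \<le> d \<Longrightarrow>
                 (\<Sum>b<M. block_value N d k x b) = (\<Sum>b<M. block_value N d k x' b)"
    and a: "a < s"
  shows "\<exists>c\<in>insert None (Some ` ({..<M} \<times> cube d 0 N)).
           (weight_vec d x c - weight_vec d x' c) mod int s = int a"
proof (cases a)
  case 0
  then show ?thesis
    by (intro bexI[of _ None]) (simp_all add: weight_vec_def)
next
  case (Suc k)
  then have "k \<le> d"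
    using s a by simp
  then obtain b w where "b < M" "w \<in> cube d 0 N"
    "weight_vec d x (Some (b, w)) - weight_vec d x' (Some (b, w)) = int a"
    using weight_vec_diff_eq[OF x x' \<open>x \<noteq> x'\<close> _ sums] Suc by blast
  then show ?thesis
    using a by (intro bexI[of _ "Some (b, w)"]) auto
qed

lemma R_ge_block_construction:
  assumes s: "2 \<le> s" "s \<le> d + 2" and M: "1 \<le> M" and q: "M * (N + 1) ^ d + 1 \<le> q"
  shows "2 ^ (M * N ^ d) \<le> R s q * (M * 2 ^ (N + 2) ^ d) ^ Suc d"
proof -
  define X where "X = Pow ({..<M} \<times> cube d 1 N)"
  define K where "K = PiE_dflt {..d} 0 (\<lambda>_. {..<M * 2 ^ (N + 2) ^ d})"
  define key where "key x = (\<lambda>k. if k \<le> d then \<Sum>b<M. block_value N d k x b else 0)" for x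
  define C where "C = insert None (Some ` ({..<M} \<times> cube d 0 N))"
  have "key \<in> X \<rightarrow> K"
  proof
    fix x assume "x \<in> X"
    then have bound: "block_value N d k x b < 2 ^ (N + 2) ^ d" for k b
      by (intro block_value_lt[of _ M]) (simp add: X_def)
    have "(\<Sum>b<M. block_value N d k x b) < (\<Sum>b<M. 2 ^ (N + 2) ^ d)" for k
      using M bound by (intro sum_strict_mono) (auto simp: lessThan_empty_iff)
    then show "key x \<in> K"
      by (simp add: key_def K_def PiE_dflt_def)
  qed
  moreover have "finite X" "finite K" "K \<noteq> {}"
    using M by (simp_all add: X_def K_def finite_cube finite_PiE_dflt lessThan_empty_iff)
  ultimately obtain t where t: "card X \<le> card (key -` {t} \<inter> X) * card K"
    using pigeonhole_card by metis
  have "card (key -` {t} \<inter> X) \<le> R s q"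
  proof (rule card_le_R_of_int_vectors[where U = "weight_vec d"])
    show "finite C"
      by (simp add: C_def finite_cube)
    have "card C = M * (N + 1) ^ d + 1"
      by (simp add: C_def card_image card_cartesian_product card_cube finite_cube)
    then show "card C \<le> q"
      using q by simp
    fix x x' a assume x: "x \<in> key -` {t} \<inter> X" and x': "x' \<in> key -` {t} \<inter> X"
      and "x \<noteq> x'" "a < s"
    have "key x = key x'"
      using x x' by simp
    then have "(\<Sum>b<M. block_value N d k x b) = (\<Sum>b<M. block_value N d k x' b)" if "k \<le> d" for k
      using that by (metis key_def)
    then show "\<exists>c\<in>C. (weight_vec d x c - weight_vec d x' c) mod int s = int a"
      unfolding C_def using x x' s(2) \<open>x \<noteq> x'\<close> \<open>a < s\<close>
      by (intro weight_vec_covers) (auto simp: X_def)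
  qed (use s in simp)
  moreover have "card X = 2 ^ (M * N ^ d)"
    by (simp add: X_def card_Pow card_cartesian_product card_cube finite_cube)
  moreover have "card K = (M * 2 ^ (N + 2) ^ d) ^ Suc d"
    by (simp add: K_def card_PiE_dflt)
  ultimately show ?thesis
    using t by (metis le_trans mult_le_mono1)
qed

section \<open>Exponential growth\<close>

lemma eventually_poly_le_pow:
  fixes \<rho> c :: real
  assumes \<rho>: "1 < \<rho>" and c: "0 \<le> c"
  shows "eventually (\<lambda>M. c * real M ^ m \<le> \<rho> ^ M) sequentially"
proof -
  define l where "l = ln \<rho>"
  have l: "0 < l"
    using \<rho> by (simp add: l_def)
  have "filterlim (\<lambda>M. real M * l) at_top sequentially"
    by (rule filterlim_at_top_mult_tendsto_pos[OF tendsto_const l filterlim_real_sequentially])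
  then have "(\<lambda>M. (real M * l) ^ m / exp (real M * l)) \<longlonglongrightarrow> 0"
    by (rule filterlim_compose[OF tendsto_power_div_exp_0])
  then have "eventually (\<lambda>M. (real M * l) ^ m / exp (real M * l) < l ^ m / (c + 1)) sequentially"
    using l c by (intro order_tendstoD(2)) auto
  then show ?thesis
  proof (rule eventually_mono)
    fix M assume small: "(real M * l) ^ m / exp (real M * l) < l ^ m / (c + 1)"
    have "exp (real M * l) = \<rho> ^ M"
      using \<rho> by (simp add: l_def exp_of_nat_mult)
    then have "real M ^ m * (c + 1) * l ^ m < \<rho> ^ M * l ^ m"
      using small \<rho> c by (simp add: field_simps power_mult_distrib)
    then have "real M ^ m * (c + 1) < \<rho> ^ M"
      using l by simp
    moreover have "c * real M ^ m \<le> real M ^ m * (c + 1)"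
      by (simp add: algebra_simps)
    ultimately show "c * real M ^ m \<le> \<rho> ^ M"
      by linarith
  qed
qed

lemma exists_pow_less_two_pow:
  fixes \<beta> :: real
  assumes "1 < \<beta>" "\<beta> < 2"
  shows "\<exists>N\<ge>1. \<beta> ^ (N + 1) ^ d < 2 ^ N ^ d"
proof -
  have ln: "0 < ln \<beta>" "ln \<beta> < ln 2"
    using assms by auto
  have "(\<lambda>N. (real (Suc N) / real N) ^ d) \<longlonglongrightarrow> 1 ^ d"
    by (intro tendsto_power LIMSEQ_Suc_n_over_n)
  then have "eventually (\<lambda>N. (real (Suc N) / real N) ^ d < ln 2 / ln \<beta>) sequentially"
    using ln by (intro order_tendstoD(2)) auto
  then obtain N where N: "1 \<le> N" "(real (Suc N) / real N) ^ d < ln 2 / ln \<beta>"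
    unfolding eventually_sequentially by (metis le_add2 le_trans max.cobounded1 max.cobounded2)
  then have "real ((N + 1) ^ d) * ln \<beta> < real (N ^ d) * ln 2"
    using ln by (simp add: power_divide field_simps)
  moreover have "exp (real n * ln x) = x ^ n" if "0 < x" for n and x :: real
    using that by (simp add: exp_of_nat_mult)
  ultimately have "\<beta> ^ (N + 1) ^ d < 2 ^ N ^ d"
    using assms by (metis exp_less_cancel_iff zero_less_numeral less_trans zero_less_one)
  then show ?thesis
    using N(1) by blast
qed

lemma exists_block_count:
  fixes L M1 q :: nat
  assumes "0 < L" "(M1 + 1) * L + 1 \<le> q"
  obtains M where "M1 \<le> M" "M * L + 1 \<le> q" "q \<le> (M + 1) * L"
proof
  define M where "M = (q - 1) div L"
  have "(M1 + 1) * L div L \<le> M"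
    unfolding M_def using assms(2) by (intro div_le_mono) simp
  moreover have "M * L \<le> q - 1" "q - 1 < L + M * L"
    unfolding M_def using assms(1) by (simp_all add: dividend_less_div_times)
  ultimately show "M1 \<le> M" "M * L + 1 \<le> q" "q \<le> (M + 1) * L"
    using assms by auto
qed

lemma pow_le_R_of_block_count:
  fixes \<beta> :: real and N s M q :: nat
  defines "L \<equiv> (N + 1) ^ s"
  assumes s: "2 \<le> s" and \<beta>: "1 \<le> \<beta>" and M: "1 \<le> M" "M * L + 1 \<le> q" "q \<le> (M + 1) * L"
    and small: "\<beta> ^ L * (real M * 2 ^ (N + 2) ^ s) ^ Suc s \<le> (2 ^ N ^ s / \<beta> ^ L) ^ M"
  shows "\<beta> ^ q \<le> real (R s q)"
proof -
  define c :: real where "c = (real M * 2 ^ (N + 2) ^ s) ^ Suc s"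
  have "2 ^ (M * N ^ s) \<le> R s q * (M * 2 ^ (N + 2) ^ s) ^ Suc s"
    using s M by (intro R_ge_block_construction) (simp_all add: L_def)
  then have "real (2 ^ (M * N ^ s)) \<le> real (R s q * (M * 2 ^ (N + 2) ^ s) ^ Suc s)"
    by (simp only: of_nat_le_iff)
  then have count: "(2 ^ N ^ s) ^ M \<le> real (R s q) * c"
    by (simp add: c_def power_mult[symmetric] mult.commute)
  have "\<beta> ^ q * c \<le> \<beta> ^ ((M + 1) * L) * c"
    using \<beta> M(3) by (intro mult_right_mono power_increasing) (simp_all add: c_def)
  also have "\<dots> = \<beta> ^ L * c * (\<beta> ^ L) ^ M"
    by (simp add: power_add power_mult[symmetric] algebra_simps)
  also have "\<dots> \<le> (2 ^ N ^ s / \<beta> ^ L) ^ M * (\<beta> ^ L) ^ M"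
    using small \<beta> by (intro mult_right_mono) (simp_all add: c_def)
  also have "\<dots> = (2 ^ N ^ s / \<beta> ^ L * \<beta> ^ L) ^ M"
    by (simp only: power_mult_distrib)
  also have "\<dots> = (2 ^ N ^ s) ^ M"
    using \<beta> by simp
  finally have "\<beta> ^ q * c \<le> real (R s q) * c"
    using count by linarith
  moreover have "0 < c"
    using M by (simp add: c_def)
  ultimately show ?thesis
    by simp
qed

lemma R_eventually_ge_pow:
  fixes \<beta> :: real
  assumes s: "2 \<le> s" and \<beta>: "0 < \<beta>" "\<beta> < 2"
  shows "\<exists>q0. \<forall>q\<ge>q0. \<beta> ^ q \<le> real (R s q)"
proof (cases "\<beta> \<le> 1")
  case True
  have "\<beta> ^ q \<le> real (R s q)" for q
    using R_ge_1[of s q] s True \<beta> power_le_one[of \<beta> q] by simp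
  then show ?thesis
    by blast
next
  case False
  obtain N where N: "\<beta> ^ (N + 1) ^ s < 2 ^ N ^ s"
    using exists_pow_less_two_pow False \<beta>(2) by (meson not_le)
  define L where "L = (N + 1) ^ s"
  define c :: real where "c = \<beta> ^ L * (2 ^ (N + 2) ^ s) ^ Suc s"
  have "1 < 2 ^ N ^ s / \<beta> ^ L"
    using N \<beta> by (simp add: L_def)
  moreover have "0 \<le> c"
    using \<beta> by (simp add: c_def)
  ultimately have "eventually (\<lambda>M. c * real M ^ Suc s \<le> (2 ^ N ^ s / \<beta> ^ L) ^ M) sequentially"
    by (rule eventually_poly_le_pow)
  then obtain M0 where M0: "\<And>M. M0 \<le> M \<Longrightarrow> c * real M ^ Suc s \<le> (2 ^ N ^ s / \<beta> ^ L) ^ M"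
    unfolding eventually_sequentially by blast
  have "\<beta> ^ q \<le> real (R s q)" if q: "(max M0 1 + 1) * L + 1 \<le> q" for q
  proof -
    obtain M where M: "max M0 1 \<le> M" "M * L + 1 \<le> q" "q \<le> (M + 1) * L"
      using exists_block_count[OF _ q] by (auto simp: L_def)
    show ?thesis
      using M0[of M] M s False
      by (intro pow_le_R_of_block_count)
        (simp_all add: L_def c_def power_mult_distrib algebra_simps)
  qed
  then show ?thesis
    by blast
qed

theorem theorem1p3:
  shows "(\<forall>s q. 2 \<le> s \<and> s \<le> q \<longrightarrow> R s q \<le> 2 ^ (q - 1))
       \<and> (\<forall>q\<ge>2. R 2 q = 2 ^ (q - 1))
       \<and> (\<forall>s\<ge>2. \<forall>\<delta>::real. 0 < \<delta> \<and> \<delta> < 2 \<longrightarrow>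
            (\<exists>q0. \<forall>q\<ge>q0. real (R s q) \<ge> (2 - \<delta>) ^ q))"
proof (intro conjI allI impI)
  fix s q :: nat
  assume "2 \<le> s \<and> s \<le> q"
  then show "R s q \<le> 2 ^ (q - 1)"
    using R_le by blast
next
  fix q :: nat
  assume "2 \<le> q"
  then show "R 2 q = 2 ^ (q - 1)"
    using R_le[of 2 q] R_2_ge[of q] by simp
next
  fix s :: nat and \<delta> :: real
  assume "2 \<le> s" "0 < \<delta> \<and> \<delta> < 2"
  then show "\<exists>q0. \<forall>q\<ge>q0. real (R s q) \<ge> (2 - \<delta>) ^ q"
    using R_eventually_ge_pow[of s "2 - \<delta>"] by simp
qed

end
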